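(* (1) The sets $\Gamma$ and $\Gamma^\circ$ are positive invariant. (2) For every $x\in\mathbb{R}^2$, $\Gamma^\circ\subset L(x)$.
   Context: Fix $\alpha>\beta>0$. For $i\in\{0,1\}$ let $\Phi_i^t(x_1,x_2)=(i+(x_1-i)e^{-\alpha t},\, i+(x_2-i)e^{-\beta t})$, $t\in\mathbb{R}$, be the flow of the vector field $u_i(x_1,x_2)=(-\alpha(x_1-i),-\beta(x_2-i))$. For $n\ge1$, $(t_1,\dots,t_n)\in(0,\infty)^n$ and $i\in\{0,1\}$, let $\Phi_i^{(t_1,\dots,t_n)}=\Phi_i^{t_n}\circ\Phi_{1-i}^{t_{n-1}}\circ\Phi_i^{t_{n-2}}\circ\cdots$ (composition of $n$ flows with alternating indices, the last one applied being $\Phi_i^{t_n}$). A point $x$ is reachable from $y$ if $x=\Phi_i^{(t_1,\dots,t_n)}(y)$ for some $i\in\{0,1\}$, $n\in\mathbb{N}$ and $(t_1,\dots,t_n)\in(0,\infty)^n$; $L(y)$ is the set of points reachable from $y$. A nonempty set $S\subset\mathbb{R}^2$ is positive invariant if $L(y)\subset S$ for all $y\in S$ (equivalently $\Phi_i^t(x)\in S$ for all $i$, $t\ge0$, $x\in S$). Let $\Gamma=\{(x_1,x_2): 0\le x_2\le1,\ x_2^{\alpha/\beta}\le x_1\le 1-(1-x_2)^{\alpha/\beta}\}$ and $\Gamma^\circ$ its interior. *)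

theory Defs
  imports "HOL-Analysis.Analysis"
begin

definition Phi :: "real \<Rightarrow> real \<Rightarrow> nat \<Rightarrow> real \<Rightarrow> real \<times> real \<Rightarrow> real \<times> real" where
  "Phi \<alpha> \<beta> i t x = (real i + (fst x - real i) * exp (- \<alpha> * t),
                        real i + (snd x - real i) * exp (- \<beta> * t))"

text \<open>alt_flow i [t_n, t_(n-1), ..., t_1] = Phi_i^{t_n} o Phi_{1-i}^{t_(n-1)} o ... ;
  the head of the list is the time of the last flow applied.\<close>
fun alt_flow :: "real \<Rightarrow> real \<Rightarrow> nat \<Rightarrow> real list \<Rightarrow> real \<times> real \<Rightarrow> real \<times> real" where
  "alt_flow \<alpha> \<beta> i [] y = y"
| "alt_flow \<alpha> \<beta> i (t # ts) y = Phi \<alpha> \<beta> i t (alt_flow \<alpha> \<beta> (1 - i) ts y)"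

definition reachable :: "real \<Rightarrow> real \<Rightarrow> real \<times> real \<Rightarrow> real \<times> real \<Rightarrow> bool" where
  "reachable \<alpha> \<beta> x y \<longleftrightarrow>
     (\<exists>i ts. i \<in> {0, 1} \<and> ts \<noteq> [] \<and> (\<forall>t\<in>set ts. t > 0) \<and> x = alt_flow \<alpha> \<beta> i ts y)"

definition L :: "real \<Rightarrow> real \<Rightarrow> real \<times> real \<Rightarrow> (real \<times> real) set" where
  "L \<alpha> \<beta> y = {x. reachable \<alpha> \<beta> x y}"

definition positive_invariant :: "real \<Rightarrow> real \<Rightarrow> (real \<times> real) set \<Rightarrow> bool" where
  "positive_invariant \<alpha> \<beta> S \<longleftrightarrow> S \<noteq> {} \<and> (\<forall>y\<in>S. L \<alpha> \<beta> y \<subseteq> S)"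

definition Gamma :: "real \<Rightarrow> real \<Rightarrow> (real \<times> real) set" where
  "Gamma \<alpha> \<beta> = {(x1, x2). 0 \<le> x2 \<and> x2 \<le> 1 \<and> x2 powr (\<alpha> / \<beta>) \<le> x1
                          \<and> x1 \<le> 1 - (1 - x2) powr (\<alpha> / \<beta>)}"

end

theory Submission
  imports Defs
begin

text \<open>Write \<open>p = \<alpha>/\<beta>\<close> and \<open>s = exp (-\<beta> t)\<close>. Then \<open>\<Phi>\<^sub>0\<^sup>t\<close> is the scaling
  \<open>(x\<^sub>1, x\<^sub>2) \<mapsto> (s\<^sup>p x\<^sub>1, s x\<^sub>2)\<close>, and \<open>\<Phi>\<^sub>1\<^sup>t\<close> is the same scaling centred at \<open>(1, 1)\<close>; the
  point reflection \<open>x \<mapsto> (1, 1) - x\<close> exchanges the two flows and preserves \<open>\<Gamma>\<close>.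
  The set \<open>\<Gamma>\<close> is invariant under \<open>\<Phi>\<^sub>0\<close> because its lower boundary \<open>x\<^sub>1 = x\<^sub>2\<^sup>p\<close> is a
  \<open>\<Phi>\<^sub>0\<close>-orbit and its upper boundary \<open>x\<^sub>1 = 1 - (1 - x\<^sub>2)\<^sup>p\<close> is pushed inwards by convexity
  of \<open>u \<mapsto> u\<^sup>p\<close>; every flow map is a homeomorphism of the plane, so the interior is
  invariant too.

  To reach an interior point \<open>z\<close> from an arbitrary \<open>x\<close>, flow along \<open>\<Phi>\<^sub>1\<close> until \<open>x\<^sub>2 > 0\<close>,
  then along \<open>\<Phi>\<^sub>0\<close> until the point \<open>w\<close> is close to the origin. The \<open>\<Phi>\<^sub>1\<close>-orbit of \<open>w\<close>
  runs to \<open>(1, 1)\<close> and so, by the intermediate value theorem, crosses the \<open>\<Phi>\<^sub>0\<close>-orbit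
  \<open>x\<^sub>1 = z\<^sub>1 (x\<^sub>2/z\<^sub>2)\<^sup>p\<close> of \<open>z\<close> above \<open>z\<close>; from the crossing point \<open>\<Phi>\<^sub>0\<close> leads to \<open>z\<close>.\<close>

lemma powr_convex_comb_one:
  fixes p s u :: real
  assumes "p \<ge> 1" "0 \<le> s" "s \<le> 1" "0 \<le> u"
  shows "(1 - s + s * u) powr p \<le> 1 - s + s * u powr p"
proof (cases "u = 0")
  case True
  have "(1 - s) powr p \<le> (1 - s) powr 1"
    using assms by (intro powr_mono') auto
  with True assms show ?thesis by simp
next
  case False
  then have "((1 - s) *\<^sub>R 1 + s *\<^sub>R u) powr p \<le> (1 - s) * 1 powr p + s * u powr p"
    using assms by (intro convex_onD[OF powr_convex]) auto
  then show ?thesis by (simp add: algebra_simps)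
qed

lemma Phi_eq_scaling:
  assumes "\<beta> > 0"
  shows "Phi \<alpha> \<beta> i t x = (real i + (fst x - real i) * exp (- \<beta> * t) powr (\<alpha> / \<beta>),
                           real i + (snd x - real i) * exp (- \<beta> * t))"
  using assms by (simp add: Phi_def powr_def)

lemma Phi_scaling_time:
  assumes "\<beta> > 0" "0 < s" "s < 1"
  obtains t where "t > 0"
    "Phi \<alpha> \<beta> i t x = (real i + (fst x - real i) * s powr (\<alpha> / \<beta>), real i + (snd x - real i) * s)"
proof
  show "- ln s / \<beta> > 0"
    using assms by (simp add: divide_neg_pos)
  show "Phi \<alpha> \<beta> i (- ln s / \<beta>) x =
      (real i + (fst x - real i) * s powr (\<alpha> / \<beta>), real i + (snd x - real i) * s)"
    using assms by (simp add: Phi_eq_scaling)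
qed

lemma Gamma_scaling:
  assumes "\<beta> > 0" "\<alpha> \<ge> \<beta>" "0 < s" "s \<le> 1" and x: "(x1, x2) \<in> Gamma \<alpha> \<beta>"
  shows "(x1 * s powr (\<alpha> / \<beta>), x2 * s) \<in> Gamma \<alpha> \<beta>"
proof -
  define p where "p = \<alpha> / \<beta>"
  have p: "p \<ge> 1" using assms by (simp add: p_def)
  have x: "0 \<le> x2" "x2 \<le> 1" "x2 powr p \<le> x1" "x1 \<le> 1 - (1 - x2) powr p"
    using x by (auto simp: Gamma_def p_def)
  have "0 \<le> x1" using x(3) powr_ge_zero order_trans by blast
  have "x1 * s powr p \<le> x1 * s"
    using powr_mono'[of 1 p s] p assms \<open>0 \<le> x1\<close> by (simp add: mult_left_mono)
  also have "\<dots> \<le> s * (1 - (1 - x2) powr p)"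
    using x(4) assms by (simp add: mult.commute mult_left_mono)
  also have "\<dots> \<le> 1 - (1 - s + s * (1 - x2)) powr p"
    using powr_convex_comb_one[of p s "1 - x2"] p assms x by (simp add: algebra_simps)
  finally have "x1 * s powr p \<le> 1 - (1 - x2 * s) powr p"
    by (simp add: algebra_simps)
  moreover have "(x2 * s) powr p \<le> x1 * s powr p"
    using x by (simp add: powr_mult mult_right_mono)
  moreover have "x2 * s \<le> 1" using x assms by (simp add: mult_le_one)
  ultimately show ?thesis using x assms by (simp add: Gamma_def p_def)
qed

lemma Phi_1_reflect:
  "(1 - fst (Phi \<alpha> \<beta> 1 t x), 1 - snd (Phi \<alpha> \<beta> 1 t x)) = Phi \<alpha> \<beta> 0 t (1 - fst x, 1 - snd x)"
  by (simp add: Phi_def algebra_simps)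

lemma Gamma_reflect: "(1 - x1, 1 - x2) \<in> Gamma \<alpha> \<beta> \<longleftrightarrow> (x1, x2) \<in> Gamma \<alpha> \<beta>"
  by (auto simp: Gamma_def)

lemma Phi_Gamma:
  assumes "\<beta> > 0" "\<alpha> \<ge> \<beta>" "i \<le> 1" "t \<ge> 0" and x: "x \<in> Gamma \<alpha> \<beta>"
  shows "Phi \<alpha> \<beta> i t x \<in> Gamma \<alpha> \<beta>"
proof -
  have s: "0 < exp (- \<beta> * t)" "exp (- \<beta> * t) \<le> 1" using assms by auto
  have Phi0: "Phi \<alpha> \<beta> 0 t y \<in> Gamma \<alpha> \<beta>" if "y \<in> Gamma \<alpha> \<beta>" for y
    using Gamma_scaling[OF assms(1,2) s, of "fst y" "snd y"] that by (simp add: Phi_eq_scaling assms)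
  show ?thesis
  proof (cases "i = 0")
    case True
    with Phi0 x show ?thesis by simp
  next
    case False
    then have "i = 1" using assms by simp
    have "(1 - fst x, 1 - snd x) \<in> Gamma \<alpha> \<beta>" using x Gamma_reflect[of "fst x" "snd x"] by simp
    then have "(1 - fst (Phi \<alpha> \<beta> 1 t x), 1 - snd (Phi \<alpha> \<beta> 1 t x)) \<in> Gamma \<alpha> \<beta>"
      unfolding Phi_1_reflect by (rule Phi0)
    with \<open>i = 1\<close> show ?thesis by (simp add: Gamma_reflect)
  qed
qed

lemma Phi_homeomorphism: "homeomorphism UNIV UNIV (Phi \<alpha> \<beta> i t) (Phi \<alpha> \<beta> i (- t))"
proof
  show "continuous_on UNIV (Phi \<alpha> \<beta> i t)" "continuous_on UNIV (Phi \<alpha> \<beta> i (- t))"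
    unfolding Phi_def by (intro continuous_intros)+
  show "Phi \<alpha> \<beta> i (- t) (Phi \<alpha> \<beta> i t x) = x" "Phi \<alpha> \<beta> i t (Phi \<alpha> \<beta> i (- t) x) = x" for x
    by (simp_all add: Phi_def mult.assoc exp_add[symmetric])
qed auto

lemma Phi_interior:
  assumes "\<And>x. x \<in> S \<Longrightarrow> Phi \<alpha> \<beta> i t x \<in> S" and "x \<in> interior S"
  shows "Phi \<alpha> \<beta> i t x \<in> interior S"
proof -
  have "open (Phi \<alpha> \<beta> i t ` interior S)"
    using homeomorphism_imp_open_map[OF Phi_homeomorphism, of "interior S"] by simp
  moreover have "Phi \<alpha> \<beta> i t ` interior S \<subseteq> S"
    using assms(1) interior_subset by blast
  ultimately show ?thesis
    using assms(2) interior_maximal by blast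
qed

lemma alt_flow_closed:
  assumes "\<And>i t y. i \<le> 1 \<Longrightarrow> t > 0 \<Longrightarrow> y \<in> S \<Longrightarrow> Phi \<alpha> \<beta> i t y \<in> S"
  shows "\<forall>t\<in>set ts. t > 0 \<Longrightarrow> i \<le> 1 \<Longrightarrow> y \<in> S \<Longrightarrow> alt_flow \<alpha> \<beta> i ts y \<in> S"
  by (induction ts arbitrary: i) (simp_all add: assms)

lemma positive_invariantI:
  assumes "S \<noteq> {}" and "\<And>i t y. i \<le> 1 \<Longrightarrow> t > 0 \<Longrightarrow> y \<in> S \<Longrightarrow> Phi \<alpha> \<beta> i t y \<in> S"
  shows "positive_invariant \<alpha> \<beta> S"
  using assms alt_flow_closed[OF assms(2)]
  by (fastforce simp: positive_invariant_def L_def reachable_def)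

lemma interior_Gamma:
  "interior (Gamma \<alpha> \<beta>) =
     {(x1, x2). 0 < x2 \<and> x2 < 1 \<and> x2 powr (\<alpha> / \<beta>) < x1 \<and> x1 < 1 - (1 - x2) powr (\<alpha> / \<beta>)}"
  (is "_ = ?G")
proof
  show "interior (Gamma \<alpha> \<beta>) \<subseteq> ?G"
  proof
    fix z assume "z \<in> interior (Gamma \<alpha> \<beta>)"
    then obtain e where "e > 0" "cball z e \<subseteq> Gamma \<alpha> \<beta>"
      using mem_interior_cball by blast
    moreover obtain z1 z2 where "z = (z1, z2)" by fastforce
    ultimately have "(z1 + d, z2) \<in> Gamma \<alpha> \<beta>" "(z1, z2 + d) \<in> Gamma \<alpha> \<beta>" if "\<bar>d\<bar> \<le> e" for d
      using that by (auto simp: subset_iff dist_Pair_Pair dist_real_def)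
    from this[of e] this[of "- e"] \<open>e > 0\<close> \<open>z = (z1, z2)\<close> show "z \<in> ?G"
      by (auto simp: Gamma_def)
  qed
  let ?S = "{x :: real \<times> real. 0 < snd x \<and> snd x < 1}"
  let ?f = "\<lambda>x. (fst x - snd x powr (\<alpha> / \<beta>), 1 - (1 - snd x) powr (\<alpha> / \<beta>) - fst x)"
  have "open (?S \<inter> ?f -` ({0<..} \<times> {0<..}))"
  proof (rule continuous_open_preimage)
    show "open ?S"
      by (intro open_Collect_conj open_Collect_less continuous_intros)
    show "continuous_on ?S ?f"
      by (intro continuous_intros) auto
  qed (intro open_Times open_greaterThan)
  moreover have "?S \<inter> ?f -` ({0<..} \<times> {0<..}) = ?G"
    by auto
  ultimately have "open ?G" by simp
  moreover have "?G \<subseteq> Gamma \<alpha> \<beta>"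
    by (auto simp: Gamma_def)
  ultimately show "?G \<subseteq> interior (Gamma \<alpha> \<beta>)"
    by (simp add: interior_maximal)
qed

lemma half_in_interior_Gamma:
  assumes "\<beta> > 0" "\<alpha> > \<beta>"
  shows "(1/2, 1/2) \<in> interior (Gamma \<alpha> \<beta>)"
proof -
  have "(1/2 :: real) powr (\<alpha> / \<beta>) < (1/2) powr 1"
    using assms by (intro powr_less_mono') auto
  then show ?thesis by (simp add: interior_Gamma)
qed

lemma Phi_tendsto_center:
  assumes "\<alpha> > 0" "\<beta> > 0"
  shows "((\<lambda>t. Phi \<alpha> \<beta> i t x) \<longlongrightarrow> (real i, real i)) at_top"
proof -
  have exp_decay: "((\<lambda>t. exp (- c * t)) \<longlongrightarrow> 0) at_top" if "c > 0" for c :: real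
    using that
    by (auto intro!: exp_at_bot[THEN filterlim_compose] filterlim_tendsto_pos_mult_at_top filterlim_ident
             simp: filterlim_uminus_at_bot)
  have "((\<lambda>t. Phi \<alpha> \<beta> i t x) \<longlongrightarrow> (real i + (fst x - real i) * 0, real i + (snd x - real i) * 0)) at_top"
    unfolding Phi_def by (intro tendsto_intros exp_decay assms)
  then show ?thesis by simp
qed

lemma Phi_0_reaches:
  assumes "\<beta> > 0" "0 < z2" "z2 < v2" "z1 * v2 powr (\<alpha> / \<beta>) = z2 powr (\<alpha> / \<beta>) * v1"
  obtains \<tau> where "\<tau> > 0" "Phi \<alpha> \<beta> 0 \<tau> (v1, v2) = (z1, z2)"
proof -
  have "0 < z2 / v2" "z2 / v2 < 1" using assms by auto
  then obtain \<tau> where "\<tau> > 0"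
    and \<tau>: "Phi \<alpha> \<beta> 0 \<tau> (v1, v2) = (v1 * (z2 / v2) powr (\<alpha> / \<beta>), v2 * (z2 / v2))"
    using Phi_scaling_time[OF assms(1), of "z2 / v2" \<alpha> 0 "(v1, v2)"] by auto
  have "v1 * (z2 / v2) powr (\<alpha> / \<beta>) = z2 powr (\<alpha> / \<beta>) * v1 / v2 powr (\<alpha> / \<beta>)"
    using assms by (simp add: powr_divide)
  also have "\<dots> = z1"
    using assms by (simp add: divide_eq_eq)
  finally show ?thesis
    using that[OF \<open>\<tau> > 0\<close>] \<tau> assms by simp
qed

lemma Phi_1_then_Phi_0_reaches:
  assumes "\<beta> > 0" "\<alpha> > 0"
    and z: "0 < z2" "z2 < 1" "z2 powr (\<alpha> / \<beta>) < z1"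
    and w: "0 < snd w"
      "z1 * (1 + (snd w - 1) * (1 - z2)) powr (\<alpha> / \<beta>) <
       z2 powr (\<alpha> / \<beta>) * (1 + (fst w - 1) * (1 - z2) powr (\<alpha> / \<beta>))"
  obtains s \<tau> where "s > 0" "\<tau> > 0" "Phi \<alpha> \<beta> 0 \<tau> (Phi \<alpha> \<beta> 1 s w) = (z1, z2)"
proof -
  define p where "p = \<alpha> / \<beta>"
  define b0 where "b0 = 1 - z2"
  define v1 where "v1 b = 1 + (fst w - 1) * b powr p" for b
  define v2 where "v2 b = 1 + (snd w - 1) * b" for b
  \<comment> \<open>\<open>(v1 b, v2 b)\<close> runs along the \<open>\<Phi>\<^sub>1\<close>-orbit of \<open>w\<close>; \<open>F b = 0\<close> says it lies on the \<open>\<Phi>\<^sub>0\<close>-orbit of \<open>z\<close>.\<close>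
  define F where "F b = z1 * v2 b powr p - z2 powr p * v1 b" for b
  have "p > 0" "0 < b0" "b0 < 1" using assms by (auto simp: p_def b0_def)
  have v2_above: "v2 b > z2" if "0 \<le> b" "b \<le> b0" for b
  proof -
    have "v2 b - z2 = (b0 - b) + snd w * b" by (simp add: v2_def b0_def algebra_simps)
    moreover have "(b0 - b) + snd w * b > 0"
      using that w(1) \<open>0 < b0\<close> by (cases "b = b0") (auto intro: add_pos_nonneg)
    ultimately show ?thesis by simp
  qed
  have pow_cont: "continuous_on {0..b0} (\<lambda>b. b powr p)"
    using \<open>p > 0\<close> by (intro continuous_on_powr') (auto intro: continuous_intros)
  have v2_pow_cont: "continuous_on {0..b0} (\<lambda>b. v2 b powr p)"
    using v2_above z(1) unfolding v2_def by (intro continuous_intros) force+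
  have "continuous_on {0..b0} F"
    unfolding F_def v1_def by (intro continuous_intros pow_cont v2_pow_cont)
  moreover have "F b0 < 0" "0 < F 0"
    using w(2) z \<open>p > 0\<close> by (simp_all add: F_def v1_def v2_def b0_def p_def)
  ultimately obtain b where b: "0 \<le> b" "b \<le> b0" "F b = 0"
    using IVT2'[of F b0 0 0] \<open>0 < b0\<close> by fastforce
  with \<open>0 < F 0\<close> \<open>b0 < 1\<close> have "0 < b" "b < 1" by (auto simp: order.order_iff_strict)
  then obtain s where "s > 0" and s: "Phi \<alpha> \<beta> 1 s w = (v1 b, v2 b)"
    using Phi_scaling_time[OF assms(1), of b \<alpha> 1 w] by (auto simp: v1_def v2_def p_def)
  have "z1 * v2 b powr (\<alpha> / \<beta>) = z2 powr (\<alpha> / \<beta>) * v1 b"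
    using b(3) by (simp add: F_def p_def)
  then obtain \<tau> where "\<tau> > 0" "Phi \<alpha> \<beta> 0 \<tau> (v1 b, v2 b) = (z1, z2)"
    using Phi_0_reaches[OF assms(1) z(1) v2_above[OF b(1,2)]] by blast
  with \<open>s > 0\<close> s that show ?thesis by simp
qed

lemma interior_Gamma_reachable:
  assumes "\<beta> > 0" "\<alpha> > 0" and z: "z \<in> interior (Gamma \<alpha> \<beta>)"
  shows "z \<in> L \<alpha> \<beta> x"
proof -
  define p where "p = \<alpha> / \<beta>"
  obtain z1 z2 where z_eq: "z = (z1, z2)" by fastforce
  have z12: "0 < z2" "z2 < 1" "z2 powr p < z1" "z1 < 1 - (1 - z2) powr p"
    using z by (auto simp: z_eq interior_Gamma p_def)
  have ev1: "\<forall>\<^sub>F t in at_top. 0 < snd (Phi \<alpha> \<beta> 1 t x)"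
    using tendsto_snd[OF Phi_tendsto_center[OF assms(2,1)]] by (rule order_tendstoD) simp
  obtain t1 where "t1 > 0" and y: "0 < snd (Phi \<alpha> \<beta> 1 t1 x)"
    using eventually_happens'[OF trivial_limit_at_top_linorder
        eventually_conj[OF eventually_gt_at_top[of "0 :: real"] ev1]] by blast
  define y where "y = Phi \<alpha> \<beta> 1 t1 x"
  \<comment> \<open>\<open>G w > 0\<close> is the crossing condition for \<open>w\<close>; at the origin it is \<open>z\<^sub>1 < 1 - (1 - z\<^sub>2)\<^sup>p\<close>.\<close>
  define G where "G w = z2 powr p * (1 + (fst w - 1) * (1 - z2) powr p)
                      - z1 * (1 + (snd w - 1) * (1 - z2)) powr p" for w :: "real \<times> real"
  have "isCont G (0, 0)"
    unfolding G_def using z12 by (intro continuous_intros) auto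
  then have "((\<lambda>T. G (Phi \<alpha> \<beta> 0 T y)) \<longlongrightarrow> G (0, 0)) at_top"
    using Phi_tendsto_center[OF assms(2,1), of 0 y, unfolded of_nat_0]
    by (rule isCont_tendsto_compose)
  moreover have "G (0, 0) = z2 powr p * (1 - (1 - z2) powr p - z1)"
    by (simp add: G_def algebra_simps)
  then have "G (0, 0) > 0" using z12 by simp
  ultimately have ev2: "\<forall>\<^sub>F T in at_top. G (Phi \<alpha> \<beta> 0 T y) > 0"
    by (auto dest: order_tendstoD)
  obtain T where "T > 0" and T: "G (Phi \<alpha> \<beta> 0 T y) > 0"
    using eventually_happens'[OF trivial_limit_at_top_linorder
        eventually_conj[OF eventually_gt_at_top[of "0 :: real"] ev2]] by blast
  define w where "w = Phi \<alpha> \<beta> 0 T y"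
  have "0 < snd w" using y by (simp add: w_def y_def Phi_def)
  moreover have "z1 * (1 + (snd w - 1) * (1 - z2)) powr p < z2 powr p * (1 + (fst w - 1) * (1 - z2) powr p)"
    using T by (simp add: G_def w_def)
  ultimately obtain s \<tau> where "s > 0" "\<tau> > 0" "Phi \<alpha> \<beta> 0 \<tau> (Phi \<alpha> \<beta> 1 s w) = (z1, z2)"
    using Phi_1_then_Phi_0_reaches[OF assms(1,2) z12(1-3)[unfolded p_def]] unfolding p_def by blast
  then have "z = alt_flow \<alpha> \<beta> 0 [\<tau>, s, T, t1] x" "\<forall>t\<in>set [\<tau>, s, T, t1]. t > 0"
    using \<open>t1 > 0\<close> \<open>T > 0\<close> by (simp_all add: z_eq w_def y_def)
  then show ?thesis
    unfolding L_def reachable_def by blast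
qed

theorem lemma4p1:
  fixes \<alpha> \<beta> :: real
  assumes "\<alpha> > \<beta>" and "\<beta> > 0"
  shows "positive_invariant \<alpha> \<beta> (Gamma \<alpha> \<beta>)
       \<and> positive_invariant \<alpha> \<beta> (interior (Gamma \<alpha> \<beta>))
       \<and> (\<forall>x :: real \<times> real. interior (Gamma \<alpha> \<beta>) \<subseteq> L \<alpha> \<beta> x)"
proof -
  have Gamma_closed: "Phi \<alpha> \<beta> i t y \<in> Gamma \<alpha> \<beta>" if "i \<le> 1" "t > 0" "y \<in> Gamma \<alpha> \<beta>" for i t y
    using Phi_Gamma[of \<beta> \<alpha> i t y] assms that by simp
  have half: "(1/2, 1/2) \<in> interior (Gamma \<alpha> \<beta>)"
    using half_in_interior_Gamma assms by blast
  have "positive_invariant \<alpha> \<beta> (Gamma \<alpha> \<beta>)"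
    using half interior_subset Gamma_closed by (intro positive_invariantI) blast+
  moreover have "positive_invariant \<alpha> \<beta> (interior (Gamma \<alpha> \<beta>))"
    using half Gamma_closed Phi_interior by (intro positive_invariantI) blast+
  moreover have "interior (Gamma \<alpha> \<beta>) \<subseteq> L \<alpha> \<beta> x" for x
    using interior_Gamma_reachable[OF assms(2)] assms by (meson less_trans subsetI)
  ultimately show ?thesis by blast
qed

end
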